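(* Let $\alpha\in(0,1)\cup(1,\infty)$ and let $W$ be a BISO channel, $BSC$ a binary symmetric channel and $BEC$ a binary erasure channel, all three with the same $\alpha$-capacity. If $\alpha>1$, or $\frac12\le\alpha<1$, or $0<\alpha\le\frac13$, then $BEC$ is $\alpha$-more capable than $W$ and $W$ is $\alpha$-more capable than $BSC$. If $\frac13\le\alpha\le\frac12$, then $BSC$ is $\alpha$-more capable than $W$ and $W$ is $\alpha$-more capable than $BEC$.
   Context: A binary input symmetric output (BISO) channel has input alphabet $\{0,1\}$ and a finite output alphabet $\{0,\pm1,\dots,\pm l\}$ with $P_{Y|X}(y|0)=P_{Y|X}(-y|1)$ for all $y$. The binary symmetric channel with crossover probability $\delta$ has output alphabet $\{0,1\}$ and flips the input with probability $\delta$; the binary erasure channel with erasure probability $\epsilon$ outputs the input with probability $1-\epsilon$ and an erasure symbol with probability $\epsilon$; both are BISO channels. Sibson's Rényi mutual information of an input distribution $P_X$ on $\{0,1\}$ and channel $P_{Y|X}$ is $I^S_\alpha(X:Y)=\frac{\alpha}{\alpha-1}\log\sum_y\big(\sum_x P_X(x)P_{Y|X}(y|x)^\alpha\big)^{1/\alpha}$; the $\alpha$-capacity is $C_\alpha(P_{Y|X})=\sup_{P_X}I^S_\alpha(X:Y)$. A channel $W_1:X\mapsto Y_1$ is $\alpha$-more capable than $W_2:X\mapsto Y_2$ if $I^S_\alpha(X:Y_1)\ge I^S_\alpha(X:Y_2)$ for every input distribution $P_X$. *)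

theory Defs
  imports Complex_Main
begin

text \<open>Binary inputs are modelled by bool (False = 0, True = 1). A channel is a
  transition function W :: bool => int => real together with a finite output set Y.\<close>

definition input_dist :: "(bool \<Rightarrow> real) \<Rightarrow> bool" where
  "input_dist P \<longleftrightarrow> (\<forall>x. P x \<ge> 0) \<and> P False + P True = 1"

definition sibson_MI :: "real \<Rightarrow> (bool \<Rightarrow> real) \<Rightarrow> (bool \<Rightarrow> int \<Rightarrow> real) \<Rightarrow> int set \<Rightarrow> real" where
  "sibson_MI \<alpha> P W Y =
     \<alpha> / (\<alpha> - 1) * ln (\<Sum>y\<in>Y. (\<Sum>x\<in>UNIV. P x * (W x y) powr \<alpha>) powr (1 / \<alpha>))"

definition alpha_capacity :: "real \<Rightarrow> (bool \<Rightarrow> int \<Rightarrow> real) \<Rightarrow> int set \<Rightarrow> real" where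
  "alpha_capacity \<alpha> W Y = (SUP P \<in> {P. input_dist P}. sibson_MI \<alpha> P W Y)"

definition more_capable ::
  "real \<Rightarrow> (bool \<Rightarrow> int \<Rightarrow> real) \<Rightarrow> int set \<Rightarrow> (bool \<Rightarrow> int \<Rightarrow> real) \<Rightarrow> int set \<Rightarrow> bool" where
  "more_capable \<alpha> W1 Y1 W2 Y2 \<longleftrightarrow>
     (\<forall>P. input_dist P \<longrightarrow> sibson_MI \<alpha> P W1 Y1 \<ge> sibson_MI \<alpha> P W2 Y2)"

definition biso_out :: "nat \<Rightarrow> int set" where
  "biso_out l = {- int l .. int l}"

definition is_biso :: "nat \<Rightarrow> (bool \<Rightarrow> int \<Rightarrow> real) \<Rightarrow> bool" where
  "is_biso l W \<longleftrightarrow>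
     (\<forall>x y. W x y \<ge> 0) \<and> (\<forall>x y. y \<notin> biso_out l \<longrightarrow> W x y = 0) \<and>
     (\<forall>x. (\<Sum>y\<in>biso_out l. W x y) = 1) \<and> (\<forall>y. W False y = W True (- y))"

text \<open>BSC: outputs {0,1}; BEC: outputs {0,1,2}, 2 being the erasure symbol.\<close>
definition bit :: "bool \<Rightarrow> int" where "bit x = (if x then 1 else 0)"

definition BSC :: "real \<Rightarrow> bool \<Rightarrow> int \<Rightarrow> real" where
  "BSC \<delta> x y = (if y = bit x then 1 - \<delta> else if y = bit (\<not> x) then \<delta> else 0)"

definition BSC_out :: "int set" where "BSC_out = {0, 1}"

definition BEC :: "real \<Rightarrow> bool \<Rightarrow> int \<Rightarrow> real" where
  "BEC \<epsilon> x y = (if y = bit x then 1 - \<epsilon> else if y = 2 then \<epsilon> else 0)"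

definition BEC_out :: "int set" where "BEC_out = {0, 1, 2}"

end

(*
  Put k = |P(0) - P(1)| and m = 1/alpha. Pairing every output y of a BISO channel with its mirror
  image writes the Sibson sum as G(k) = 1/2 * sum_y w_y * E(k a_y), where E(x) = (1 + x)^m + (1 - x)^m,
  with weights w_y >= 0 and biases a_y in [0,1] normalised by G(1) = 1. As (m - 1) E increases on [0,1],
  the capacity is attained at k = 0 and equals alpha/(alpha - 1) * ln (sum_y w_y), so channels of equal
  capacity have equal total weight. Along the curve t |-> (E(t), E(k t)) the slope k E'(k t) / E'(t)
  is monotone in t, in a direction fixed by the sign of (m - 2)(m - 3); this comes down to the
  monotonicity of the elasticity of (1 + x)^(m-1) - (1 - x)^(m-1). So E(k .) is a convex or a concave
  function of E, and Jensen's inequality makes the BSC (one bias) and the BEC (biases 0 and 1 only)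
  the two extreme channels of a given total weight.
*)

theory Submission
  imports Defs
begin

section \<open>The powers of 1 + x and 1 - x\<close>

definition even_pow :: "real \<Rightarrow> real \<Rightarrow> real" where
  "even_pow m x = (1 + x) powr m + (1 - x) powr m"

definition odd_pow :: "real \<Rightarrow> real \<Rightarrow> real" where
  "odd_pow n x = (1 + x) powr n - (1 - x) powr n"

lemma has_real_derivative_odd_pow:
  assumes "-1 < x" "x < 1"
  shows "(odd_pow n has_real_derivative n * even_pow (n - 1) x) (at x)"
  unfolding odd_pow_def even_pow_def using assms
  by (auto intro!: derivative_eq_intros simp: algebra_simps)

lemma has_real_derivative_even_pow:
  assumes "-1 < x" "x < 1"
  shows "(even_pow m has_real_derivative m * odd_pow (m - 1) x) (at x)"
  unfolding odd_pow_def even_pow_def using assms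
  by (auto intro!: derivative_eq_intros simp: algebra_simps)

lemma odd_pow_sign:
  assumes "n \<noteq> 0" "0 < x" "x < 1"
  shows "0 < n * odd_pow n x"
proof (cases "n > 0")
  case True
  then have "(1 - x) powr n < (1 + x) powr n" using assms by (intro powr_less_mono2) auto
  then show ?thesis using True unfolding odd_pow_def by simp
next
  case False
  then have "n < 0" using assms by simp
  moreover have "(1 + x) powr n < (1 - x) powr n" using assms \<open>n < 0\<close> by (intro powr_less_mono2_neg) auto
  ultimately show ?thesis unfolding odd_pow_def by (simp add: mult_neg_neg)
qed

lemma odd_pow_div_pos:
  assumes "n \<noteq> 0" "0 < x" "x < 1" "0 < y" "y < 1"
  shows "0 < odd_pow n x / odd_pow n y"
  using odd_pow_sign[OF assms(1-3)] odd_pow_sign[OF assms(1,4,5)]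
  by (cases "0 < n") (auto simp: zero_less_mult_iff zero_less_divide_iff)

lemma even_pow_zero [simp]: "even_pow m 0 = 2"
  unfolding even_pow_def by simp

lemma even_pow_abs: "even_pow m \<bar>x\<bar> = even_pow m x"
  unfolding even_pow_def by (cases "0 \<le> x") (simp_all add: add.commute)

lemma even_pow_pos: "0 \<le> x \<Longrightarrow> x \<le> 1 \<Longrightarrow> 0 < even_pow m x"
  unfolding even_pow_def by (simp add: add_pos_nonneg)

lemma continuous_on_even_pow:
  assumes "m > 0"
  shows "continuous_on {-1..1} (even_pow m)"
  unfolding even_pow_def using assms by (intro continuous_intros continuous_on_powr') auto

lemma even_pow_strict_mono:
  assumes "m > 0" "m \<noteq> 1" "0 \<le> a" "a < b" "b \<le> 1"
  shows "(m - 1) * even_pow m a < (m - 1) * even_pow m b"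
proof (rule DERIV_pos_imp_increasing_open[OF \<open>a < b\<close>])
  fix x assume x: "a < x" "x < b"
  have "0 < (m - 1) * odd_pow (m - 1) x" using odd_pow_sign assms x by simp
  then have "0 < (m - 1) * (m * odd_pow (m - 1) x)" using \<open>m > 0\<close> by (simp add: mult.left_commute)
  moreover have "((\<lambda>x. (m - 1) * even_pow m x) has_real_derivative (m - 1) * (m * odd_pow (m - 1) x)) (at x)"
    using x assms by (intro DERIV_cmult has_real_derivative_even_pow) auto
  ultimately show "\<exists>y. ((\<lambda>x. (m - 1) * even_pow m x) has_real_derivative y) (at x) \<and> 0 < y" by blast
next
  show "continuous_on {a..b} (\<lambda>x. (m - 1) * even_pow m x)"
    using continuous_on_subset[OF continuous_on_even_pow[OF \<open>m > 0\<close>], of "{a..b}"] assms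
    by (intro continuous_intros) auto
qed

lemma even_pow_mono:
  assumes "m > 0" "m \<noteq> 1" "0 \<le> a" "a \<le> b" "b \<le> 1"
  shows "(m - 1) * even_pow m a \<le> (m - 1) * even_pow m b"
  using even_pow_strict_mono[of m a b] assms by (cases "a = b") auto

lemma even_pow_one_sign:
  assumes "0 < m" "m \<noteq> 1"
  shows "0 < (m - 1) * (even_pow m 1 - 2)"
  using even_pow_strict_mono[OF assms, of 0 1] by (simp add: algebra_simps)

section \<open>Monotonicity of the slope ratio\<close>

lemma two_powr_sub_quadratic_sign:
  fixes n r :: real
  assumes "1 \<le> r"
  shows "0 \<le> n * (n - 2) * (2 * r powr n - n * r\<^sup>2 + n - 2)"
proof -
  let ?V = "\<lambda>r. n * (n - 2) * (2 * r powr n - n * r\<^sup>2 + n - 2)"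
  have "?V 1 \<le> ?V r"
  proof (rule deriv_nonneg_imp_mono[where g = ?V])
    fix x assume "x \<in> {1..r}"
    then have x: "1 \<le> x" by simp
    show "(?V has_real_derivative n * (n - 2) * (2 * (n * x powr (n - 1)) - n * (2 * x))) (at x)"
      using x by (auto intro!: derivative_eq_intros)
    have "x powr (n - 1) = x * x powr (n - 2)"
      using x powr_add[of x 1 "n - 2"] by simp
    then have eq: "n * (n - 2) * (2 * (n * x powr (n - 1)) - n * (2 * x))
        = 2 * (n * n) * x * ((n - 2) * (x powr (n - 2) - 1))"
      by (simp add: algebra_simps)
    have "0 \<le> (n - 2) * (x powr (n - 2) - 1)"
      using x ge_one_powr_ge_zero[of x "n - 2"] powr_mono[of "n - 2" 0 x]
      by (cases "n \<ge> 2") (auto intro: mult_nonpos_nonpos)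
    then show "0 \<le> n * (n - 2) * (2 * (n * x powr (n - 1)) - n * (2 * x))"
      unfolding eq using x by (simp add: mult_nonneg_nonneg)
  qed (use assms in auto)
  then show ?thesis by simp
qed

lemma elasticity_kernel_numerator_sign:
  fixes n r :: real
  assumes "1 \<le> r"
  shows "0 \<le> n * (n - 1) * (n - 2) * (r powr (2 * n - 2) + (1 - n) * r powr n + (n - 1) * r powr (n - 2) - 1)"
proof -
  let ?T = "\<lambda>r. n * (n - 1) * (n - 2) * (r powr (2 * n - 2) + (1 - n) * r powr n + (n - 1) * r powr (n - 2) - 1)"
  let ?T' = "\<lambda>r. n * (n - 1) * (n - 2) * ((2 * n - 2) * r powr (2 * n - 3) + (1 - n) * (n * r powr (n - 1))
                 + (n - 1) * ((n - 2) * r powr (n - 3)))"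
  have "?T 1 \<le> ?T r"
  proof (rule deriv_nonneg_imp_mono[where g = ?T and g' = ?T'])
    fix x assume "x \<in> {1..r}"
    then have x: "1 \<le> x" by simp
    show "(?T has_real_derivative ?T' x) (at x)"
      using x by (auto intro!: derivative_eq_intros simp: algebra_simps)
    define a where "a = x powr (n - 3)"
    have shift: "x powr (b + 3) = x powr b * x ^ 3" for b
      using x by (simp add: powr_add powr_numeral)
    have "x powr (n - 1) = a * x\<^sup>2" "x powr n = a * x ^ 3" "x powr (2 * n - 3) = a * a * x ^ 3"
      using shift[of "n - 3"] shift[of "2 * n - 6"] x
      by (auto simp: a_def powr_add[symmetric] power2_eq_square power3_eq_cube algebra_simps
                     powr_mult_base)
    then have eq: "?T' x = (n - 1)\<^sup>2 * a * (n * (n - 2) * (2 * x powr n - n * x\<^sup>2 + n - 2))"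
      by (simp add: a_def[symmetric] algebra_simps power2_eq_square power3_eq_cube)
    have "0 \<le> a" by (simp add: a_def)
    then show "0 \<le> ?T' x"
      unfolding eq using two_powr_sub_quadratic_sign[OF x, of n] by (metis mult_nonneg_nonneg zero_le_power2)
  qed (use assms in auto)
  then show ?thesis by simp
qed

definition elasticity_kernel :: "real \<Rightarrow> real \<Rightarrow> real" where
  "elasticity_kernel n r = (r - r powr (n - 1)) / (r powr n - 1)"

lemma elasticity_kernel_mono:
  assumes "1 < r1" "r1 \<le> r2"
  shows "0 \<le> n * (n - 1) * (n - 2) * (elasticity_kernel n r2 - elasticity_kernel n r1)"
proof (cases "n = 0")
  case False
  let ?Q = "\<lambda>r. n * (n - 1) * (n - 2) * elasticity_kernel n r"
  let ?Q' = "\<lambda>r. n * (n - 1) * (n - 2) * (((1 - (n - 1) * r powr (n - 2)) * (r powr n - 1)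
                 - (r - r powr (n - 1)) * (n * r powr (n - 1))) / (r powr n - 1)\<^sup>2)"
  have "?Q r1 \<le> ?Q r2"
  proof (rule deriv_nonneg_imp_mono[where g = ?Q and g' = ?Q'])
    fix x assume "x \<in> {r1..r2}"
    then have x: "1 < x" using assms by simp
    have ne: "x powr n - 1 \<noteq> 0" using powr_inj[of x n 0] x False by auto
    show "(?Q has_real_derivative ?Q' x) (at x)"
      unfolding elasticity_kernel_def using x ne
      by (auto intro!: derivative_eq_intros simp: power2_eq_square) (simp add: algebra_simps)
    define a where "a = x powr (n - 2)"
    have shift: "x powr (b + 2) = x powr b * x\<^sup>2" "x powr (b + 1) = x powr b * x" for b
      using x by (simp_all add: powr_add powr_numeral)
    have "x powr (n - 1) = a * x" "x powr n = a * x\<^sup>2" "x powr (2 * n - 2) = a * a * x\<^sup>2"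
      using shift[of "n - 2"] shift(1)[of "2 * n - 4"] x
      by (auto simp: a_def powr_add[symmetric] power2_eq_square algebra_simps)
    then have num: "(1 - (n - 1) * x powr (n - 2)) * (x powr n - 1) - (x - x powr (n - 1)) * (n * x powr (n - 1))
        = x powr (2 * n - 2) + (1 - n) * x powr n + (n - 1) * x powr (n - 2) - 1"
      by (simp add: a_def[symmetric] algebra_simps power2_eq_square)
    show "0 \<le> ?Q' x"
      unfolding num times_divide_eq_right
      using elasticity_kernel_numerator_sign[of x n] x by (intro divide_nonneg_nonneg) auto
  qed (use assms in auto)
  then show ?thesis by (simp add: algebra_simps)
qed simp

definition odd_pow_elasticity :: "real \<Rightarrow> real \<Rightarrow> real" where
  "odd_pow_elasticity n x = x * (n * even_pow (n - 1) x) / odd_pow n x"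

lemma odd_pow_elasticity_eq_kernel:
  assumes "n \<noteq> 0" "0 < x" "x < 1"
  shows "odd_pow_elasticity n x = n / 2 * (1 + elasticity_kernel n ((1 + x) / (1 - x)))"
proof -
  define b where "b = 1 - x"
  define r where "r = (1 + x) / (1 - x)"
  have b: "0 < b" and r: "1 < r" using assms by (simp_all add: b_def r_def field_simps)
  have xr: "1 + x = b * r" and xb: "x = b * (r - 1) / 2" and bx: "1 - x = b"
    using b by (simp_all add: b_def r_def field_simps)
  have rn: "r powr n = r * r powr (n - 1)" using r by (simp add: powr_diff)
  have "r powr n \<noteq> 1" using powr_inj[of r n 0] r assms(1) by auto
  then have ne: "r powr n - 1 \<noteq> 0" by simp
  have D: "odd_pow n x = b powr n * (r powr n - 1)"
    unfolding odd_pow_def xr bx using b r by (simp add: powr_mult algebra_simps)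
  have XE: "x * even_pow (n - 1) x = b powr n * ((r - 1) / 2 * (r powr (n - 1) + 1))"
    unfolding even_pow_def xr bx using b r
    by (subst xb) (simp add: powr_mult powr_diff field_simps)
  have "odd_pow_elasticity n x = n * (x * even_pow (n - 1) x) / odd_pow n x"
    by (simp add: odd_pow_elasticity_def)
  also have "\<dots> = n * ((r - 1) / 2 * (r powr (n - 1) + 1)) / (r powr n - 1)"
    unfolding D XE using b by simp
  also have "\<dots> = n / 2 * (1 + elasticity_kernel n r)"
    unfolding elasticity_kernel_def using ne by (simp add: rn field_simps)
  finally show ?thesis unfolding r_def .
qed

text \<open>Only the sign of \<sigma> matters: \<sigma> = 1 and \<sigma> = -1 give the two directions of monotonicity,
  and both are available when (n - 1) * (n - 2) = 0.\<close>

lemma odd_pow_elasticity_mono: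
  assumes "0 < x1" "x1 \<le> x2" "x2 < 1" and \<sigma>: "0 \<le> \<sigma> * ((n - 1) * (n - 2))"
  shows "0 \<le> \<sigma> * (odd_pow_elasticity n x2 - odd_pow_elasticity n x1)"
proof (cases "n = 0")
  case False
  define r1 where "r1 = (1 + x1) / (1 - x1)"
  define r2 where "r2 = (1 + x2) / (1 - x2)"
  have r: "1 < r1" "r1 \<le> r2" using assms by (simp_all add: r1_def r2_def field_simps)
  define \<Delta> where "\<Delta> = n * (elasticity_kernel n r2 - elasticity_kernel n r1)"
  have diff: "odd_pow_elasticity n x2 - odd_pow_elasticity n x1 = \<Delta> / 2"
    using odd_pow_elasticity_eq_kernel[OF False] assms
    unfolding \<Delta>_def r1_def r2_def by (simp add: algebra_simps)
  have \<Delta>: "0 \<le> (n - 1) * (n - 2) * \<Delta>"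
    using elasticity_kernel_mono[OF r, of n] unfolding \<Delta>_def by (simp add: algebra_simps)
  consider "n = 1" | "n = 2" | "(n - 1) * (n - 2) \<noteq> 0" by fastforce
  then show ?thesis
  proof cases
    case 3
    define c where "c = (n - 1) * (n - 2)"
    have "\<sigma> * \<Delta> = \<sigma> * c * (c * \<Delta>) / c\<^sup>2"
      using 3 by (simp add: c_def[symmetric] power2_eq_square)
    then have "0 \<le> \<sigma> * \<Delta>" using \<sigma> \<Delta> by (simp add: c_def)
    then show ?thesis unfolding diff by simp
  qed (use r diff \<Delta>_def in \<open>simp_all add: elasticity_kernel_def\<close>)
qed (simp add: odd_pow_elasticity_def)

definition odd_pow_ratio :: "real \<Rightarrow> real \<Rightarrow> real \<Rightarrow> real" where
  "odd_pow_ratio n k t = k * odd_pow n (k * t) / odd_pow n t"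

lemma odd_pow_ratio_antimono:
  assumes k: "0 \<le> k" "k \<le> 1" and t: "0 < t1" "t1 \<le> t2" "t2 < 1"
    and \<sigma>: "0 \<le> \<sigma> * ((n - 1) * (n - 2))"
  shows "\<sigma> * odd_pow_ratio n k t2 \<le> \<sigma> * odd_pow_ratio n k t1"
proof (cases "n = 0 \<or> k = 0")
  case False
  then have n: "n \<noteq> 0" and k0: "0 < k" using k by auto
  let ?D = "odd_pow n" and ?E = "even_pow (n - 1)" and ?\<eta> = "odd_pow_elasticity n"
  let ?g' = "\<lambda>t. \<sigma> * (k * ((n * ?E (k * t) * k * ?D t - ?D (k * t) * (n * ?E t)) / (?D t * ?D t)))"
  show ?thesis
  proof (rule deriv_nonpos_imp_antimono[where g = "\<lambda>t. \<sigma> * odd_pow_ratio n k t" and g' = ?g'])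
    fix t assume "t \<in> {t1..t2}"
    then have t01: "0 < t" "t < 1" using t by auto
    then have kt: "0 < k * t" "k * t \<le> t" using k0 k by (simp_all add: mult_le_cancel_right1)
    then have "-1 < k * t" "k * t < 1" using t01 by linarith+
    have D: "0 < n * ?D t" "0 < n * ?D (k * t)" using odd_pow_sign n t01 kt by auto
    then have "?D t \<noteq> 0" by auto
    have "((\<lambda>t. ?D (k * t)) has_real_derivative n * ?E (k * t) * k) (at t)"
      using \<open>-1 < k * t\<close> \<open>k * t < 1\<close>
      by (intro DERIV_chain2[OF has_real_derivative_odd_pow]) (auto intro!: derivative_eq_intros)
    then show "((\<lambda>t. \<sigma> * odd_pow_ratio n k t) has_real_derivative ?g' t) (at t)"
      unfolding odd_pow_ratio_def using D t01
      by (auto intro!: derivative_eq_intros has_real_derivative_odd_pow simp: algebra_simps)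
    have nE: "n * ?E y = ?\<eta> y * ?D y / y" if "0 < y" "0 < n * ?D y" for y
      using that unfolding odd_pow_elasticity_def by (auto simp: field_simps)
    txt \<open>The numerator of the quotient rule factors through the elasticity.\<close>
    have eq: "?g' t = k / t * (?D (k * t) / ?D t) * (\<sigma> * (?\<eta> (k * t) - ?\<eta> t))"
      using D t01 kt \<open>?D t \<noteq> 0\<close> by (simp add: nE field_simps)
    have "0 \<le> k / t * (?D (k * t) / ?D t)"
      using odd_pow_div_pos[OF n kt(1) \<open>k * t < 1\<close> t01] k0 t01 by (intro mult_nonneg_nonneg) auto
    moreover have "\<sigma> * (?\<eta> (k * t) - ?\<eta> t) \<le> 0"
      using odd_pow_elasticity_mono[OF kt(1,2) t01(2) \<sigma>] by (simp add: algebra_simps)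
    ultimately show "?g' t \<le> 0"
      unfolding eq by (rule mult_nonneg_nonpos)
  qed (use t in auto)
qed (use k t in \<open>auto simp: odd_pow_ratio_def odd_pow_def\<close>)

section \<open>Curves with monotone slope\<close>

text \<open>If f' = \<rho> * g' with g increasing and \<rho> nondecreasing, then f is a convex function of g:
  it lies above its tangents and below its chords.\<close>

context
  fixes f g \<rho> g' :: "real \<Rightarrow> real" and a b :: real
  assumes continuous_f: "continuous_on {a..b} f" and continuous_g: "continuous_on {a..b} g"
    and deriv_f: "\<And>t. a < t \<Longrightarrow> t < b \<Longrightarrow> (f has_real_derivative \<rho> t * g' t) (at t)"
    and deriv_g: "\<And>t. a < t \<Longrightarrow> t < b \<Longrightarrow> (g has_real_derivative g' t) (at t)"
    and deriv_g_pos: "\<And>t. a < t \<Longrightarrow> t < b \<Longrightarrow> 0 < g' t"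
    and mono_\<rho>: "\<And>s t. a < s \<Longrightarrow> s \<le> t \<Longrightarrow> t < b \<Longrightarrow> \<rho> s \<le> \<rho> t"
begin

lemma deriv_sub_slope:
  assumes "a < t" "t < b"
  shows "((\<lambda>x. f x - c * g x) has_real_derivative (\<rho> t - c) * g' t) (at t)"
proof -
  have "((\<lambda>x. f x - c * g x) has_real_derivative \<rho> t * g' t - c * g' t) (at t)"
    using assms by (intro DERIV_diff DERIV_cmult deriv_f deriv_g)
  then show ?thesis by (simp only: left_diff_distrib)
qed

lemma continuous_on_sub_slope:
  assumes "a \<le> s" "t \<le> b"
  shows "continuous_on {s..t} (\<lambda>x. f x - c * g x)"
  using continuous_on_subset[OF continuous_f] continuous_on_subset[OF continuous_g] assms
  by (intro continuous_intros) auto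

lemma sub_slope_mono:
  assumes "a \<le> s" "s \<le> t" "t \<le> b" "\<And>x. s < x \<Longrightarrow> x < t \<Longrightarrow> c \<le> \<rho> x"
  shows "f s - c * g s \<le> f t - c * g t"
proof (rule DERIV_nonneg_imp_increasing_open[OF \<open>s \<le> t\<close> _ continuous_on_sub_slope[OF assms(1,3)]])
  fix x assume "s < x" "x < t"
  then show "\<exists>y. ((\<lambda>x. f x - c * g x) has_real_derivative y) (at x) \<and> 0 \<le> y"
    using deriv_sub_slope[of x c] deriv_g_pos[of x] assms by (intro exI conjI) auto
qed

lemma sub_slope_antimono:
  assumes "a \<le> s" "s \<le> t" "t \<le> b" "\<And>x. s < x \<Longrightarrow> x < t \<Longrightarrow> \<rho> x \<le> c"
  shows "f t - c * g t \<le> f s - c * g s"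
proof (rule DERIV_nonpos_imp_decreasing_open[OF \<open>s \<le> t\<close> _ continuous_on_sub_slope[OF assms(1,3)]])
  fix x assume "s < x" "x < t"
  then show "\<exists>y. ((\<lambda>x. f x - c * g x) has_real_derivative y) (at x) \<and> y \<le> 0"
    using deriv_sub_slope[of x c] deriv_g_pos[of x] assms
    by (intro exI conjI) (auto simp: mult_nonpos_nonneg)
qed

lemma curve_tangent:
  assumes "a < \<tau>\<^sub>0" "\<tau>\<^sub>0 < b" "a \<le> \<tau>" "\<tau> \<le> b"
  shows "\<rho> \<tau>\<^sub>0 * (g \<tau> - g \<tau>\<^sub>0) \<le> f \<tau> - f \<tau>\<^sub>0"
proof (cases "\<tau>\<^sub>0 \<le> \<tau>")
  case True
  then have "f \<tau>\<^sub>0 - \<rho> \<tau>\<^sub>0 * g \<tau>\<^sub>0 \<le> f \<tau> - \<rho> \<tau>\<^sub>0 * g \<tau>"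
    using assms by (intro sub_slope_mono mono_\<rho>) simp_all
  then show ?thesis by (simp add: algebra_simps)
next
  case False
  then have "f \<tau>\<^sub>0 - \<rho> \<tau>\<^sub>0 * g \<tau>\<^sub>0 \<le> f \<tau> - \<rho> \<tau>\<^sub>0 * g \<tau>"
    using assms by (intro sub_slope_antimono mono_\<rho>) simp_all
  then show ?thesis by (simp add: algebra_simps)
qed

lemma curve_chord:
  assumes "a \<le> \<tau>" "\<tau> \<le> b"
  shows "(f \<tau> - f a) * (g b - g a) \<le> (f b - f a) * (g \<tau> - g a)"
proof -
  consider "\<tau> = a" | "\<tau> = b" | "a < \<tau>" "\<tau> < b" using assms by linarith
  then show ?thesis
  proof cases
    case 3
    have "g a < g b"
    proof (rule DERIV_pos_imp_increasing_open[where f = g])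
      fix x assume "a < x" "x < b"
      then show "\<exists>y. (g has_real_derivative y) (at x) \<and> 0 < y"
        using deriv_g deriv_g_pos by blast
    qed (use 3 continuous_g in auto)
    define c where "c = (f b - f a) / (g b - g a)"
    have slope: "c * (g b - g a) = f b - f a"
      using \<open>g a < g b\<close> unfolding c_def by simp
    have "f \<tau> - c * g \<tau> \<le> f a - c * g a"
    proof (cases "\<rho> \<tau> \<le> c")
      case True
      show ?thesis
      proof (rule sub_slope_antimono)
        fix x assume "a < x" "x < \<tau>"
        then show "\<rho> x \<le> c" using mono_\<rho>[of x \<tau>] True 3 by linarith
      qed (use 3 in auto)
    next
      case False
      have "f \<tau> - c * g \<tau> \<le> f b - c * g b"
      proof (rule sub_slope_mono)
        fix x assume "\<tau> < x" "x < b"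
        then show "c \<le> \<rho> x" using mono_\<rho>[of \<tau> x] False 3 by linarith
      qed (use 3 in auto)
      also have "\<dots> = f a - c * g a" using slope by (simp add: algebra_simps)
      finally show ?thesis .
    qed
    then have "(f \<tau> - f a) * (g b - g a) \<le> c * (g \<tau> - g a) * (g b - g a)"
      using \<open>g a < g b\<close> by (intro mult_right_mono) (simp_all add: algebra_simps)
    also have "\<dots> = c * (g b - g a) * (g \<tau> - g a)" by (simp only: mult_ac)
    also have "\<dots> = (f b - f a) * (g \<tau> - g a)" by (simp only: slope)
    finally show ?thesis .
  qed simp_all
qed

end

lemma has_real_derivative_even_pow_scaled:
  assumes "m \<noteq> 1" "0 \<le> k" "k \<le> 1" "0 < t" "t < 1"
  shows "((\<lambda>t. even_pow m (k * t)) has_real_derivative odd_pow_ratio (m - 1) k t * (m * odd_pow (m - 1) t)) (at t)"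
proof -
  have "0 \<le> k * t" "k * t \<le> t" using assms by (simp_all add: mult_left_le_one_le)
  then have "-1 < k * t" "k * t < 1" using assms by linarith+
  then have "((\<lambda>t. even_pow m (k * t)) has_real_derivative m * odd_pow (m - 1) (k * t) * k) (at t)"
    by (intro DERIV_chain2[OF has_real_derivative_even_pow]) (auto intro!: derivative_eq_intros)
  moreover have "odd_pow (m - 1) t \<noteq> 0" using odd_pow_sign[of "m - 1" t] assms by auto
  ultimately show ?thesis by (simp add: odd_pow_ratio_def mult_ac)
qed

lemma
  assumes m: "0 < m" "m \<noteq> 1" and \<sigma>: "0 \<le> \<sigma> * ((m - 2) * (m - 3))" and k: "0 \<le> k" "k \<le> 1"
  shows even_pow_tangent: "0 < \<tau>\<^sub>0 \<Longrightarrow> \<tau>\<^sub>0 < 1 \<Longrightarrow> 0 \<le> \<tau> \<Longrightarrow> \<tau> \<le> 1 \<Longrightarrow>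
      \<sigma> * (m - 1) * (even_pow m (k * \<tau>) - even_pow m (k * \<tau>\<^sub>0)
        - odd_pow_ratio (m - 1) k \<tau>\<^sub>0 * (even_pow m \<tau> - even_pow m \<tau>\<^sub>0)) \<le> 0"
    and even_pow_chord: "0 \<le> \<tau> \<Longrightarrow> \<tau> \<le> 1 \<Longrightarrow>
      0 \<le> \<sigma> * ((even_pow m (k * \<tau>) - 2) * (even_pow m 1 - 2) - (even_pow m k - 2) * (even_pow m \<tau> - 2))"
proof -
  let ?f = "\<lambda>t. - \<sigma> * (m - 1) * even_pow m (k * t)" and ?g = "\<lambda>t. (m - 1) * even_pow m t"
  let ?\<rho> = "\<lambda>t. - \<sigma> * odd_pow_ratio (m - 1) k t" and ?g' = "\<lambda>t. (m - 1) * (m * odd_pow (m - 1) t)"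
  have E: "continuous_on {0..1} (even_pow m)"
    using continuous_on_subset[OF continuous_on_even_pow[OF m(1)]] by auto
  have Ek: "continuous_on {0..1} (\<lambda>t. even_pow m (k * t))"
    using k by (intro continuous_on_compose2[OF continuous_on_even_pow[OF m(1)]] continuous_intros)
      (auto simp: mult_le_one order.trans[of _ 0])
  have hyps:
    "continuous_on {0..1} ?f" "continuous_on {0..1} ?g"
    "\<And>t. 0 < t \<Longrightarrow> t < 1 \<Longrightarrow> (?f has_real_derivative ?\<rho> t * ?g' t) (at t)"
    "\<And>t. 0 < t \<Longrightarrow> t < 1 \<Longrightarrow> (?g has_real_derivative ?g' t) (at t)"
    "\<And>t. 0 < t \<Longrightarrow> t < 1 \<Longrightarrow> 0 < ?g' t"
    "\<And>s t. 0 < s \<Longrightarrow> s \<le> t \<Longrightarrow> t < 1 \<Longrightarrow> ?\<rho> s \<le> ?\<rho> t"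
  proof -
    show "continuous_on {0..1} ?f" by (rule continuous_on_mult_left[OF Ek])
    show "continuous_on {0..1} ?g" by (rule continuous_on_mult_left[OF E])
    fix t :: real
    assume t: "0 < t" "t < 1"
    show "(?f has_real_derivative ?\<rho> t * ?g' t) (at t)"
      using DERIV_cmult[OF has_real_derivative_even_pow_scaled[OF m(2) k t], of "- \<sigma> * (m - 1)"]
      by (simp add: algebra_simps)
    show "(?g has_real_derivative ?g' t) (at t)"
      using t by (intro DERIV_cmult has_real_derivative_even_pow) auto
    show "0 < ?g' t"
      using odd_pow_sign[of "m - 1" t] m t by (simp add: mult.left_commute)
  next
    fix s t :: real
    assume "0 < s" "s \<le> t" "t < 1"
    then show "?\<rho> s \<le> ?\<rho> t"
      using odd_pow_ratio_antimono[OF k, of s t \<sigma> "m - 1"] \<sigma> by (simp add: algebra_simps)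
  qed
  show "\<sigma> * (m - 1) * (even_pow m (k * \<tau>) - even_pow m (k * \<tau>\<^sub>0)
        - odd_pow_ratio (m - 1) k \<tau>\<^sub>0 * (even_pow m \<tau> - even_pow m \<tau>\<^sub>0)) \<le> 0"
    if "0 < \<tau>\<^sub>0" "\<tau>\<^sub>0 < 1" "0 \<le> \<tau>" "\<tau> \<le> 1"
    using curve_tangent[OF hyps that] by (simp add: algebra_simps)
  show "0 \<le> \<sigma> * ((even_pow m (k * \<tau>) - 2) * (even_pow m 1 - 2) - (even_pow m k - 2) * (even_pow m \<tau> - 2))"
    if "0 \<le> \<tau>" "\<tau> \<le> 1"
  proof -
    have "0 \<le> (m - 1)\<^sup>2 * (\<sigma> * ((even_pow m (k * \<tau>) - 2) * (even_pow m 1 - 2)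
                                  - (even_pow m k - 2) * (even_pow m \<tau> - 2)))"
      using curve_chord[OF hyps that] by (simp add: algebra_simps power2_eq_square)
    then show ?thesis using m by (simp add: zero_le_mult_iff)
  qed
qed

section \<open>Profiles\<close>

text \<open>A profile describes a channel as a family of binary symmetric components, component i having
  weight w i and bias a i; the normalisation says that the Sibson sum of a deterministic input is 1.\<close>

definition profile :: "real \<Rightarrow> 'a set \<Rightarrow> ('a \<Rightarrow> real) \<Rightarrow> ('a \<Rightarrow> real) \<Rightarrow> bool" where
  "profile m I w a \<longleftrightarrow> finite I \<and> (\<forall>i\<in>I. 0 \<le> w i \<and> 0 \<le> a i \<and> a i \<le> 1)
     \<and> (\<Sum>i\<in>I. w i * even_pow m (a i)) = 2"

definition profile_fun :: "real \<Rightarrow> 'a set \<Rightarrow> ('a \<Rightarrow> real) \<Rightarrow> ('a \<Rightarrow> real) \<Rightarrow> real \<Rightarrow> real" where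
  "profile_fun m I w a k = (\<Sum>i\<in>I. w i * even_pow m (k * a i)) / 2"

lemma profile_fun_zero: "profile_fun m I w a 0 = sum w I"
  unfolding profile_fun_def by (simp add: sum_distrib_right[symmetric])

lemma profile_fun_pos:
  assumes p: "profile m I w a" and k: "0 \<le> k" "k \<le> 1"
  shows "0 < profile_fun m I w a k"
proof -
  have I: "finite I" "\<And>i. i \<in> I \<Longrightarrow> 0 \<le> w i \<and> 0 \<le> a i \<and> a i \<le> 1"
    using p unfolding profile_def by auto
  have E: "0 < even_pow m (k * a i)" if "i \<in> I" for i
    using I(2)[OF that] k by (intro even_pow_pos) (auto simp: mult_le_one)
  obtain j where j: "j \<in> I" "w j \<noteq> 0"
    using p unfolding profile_def by (metis (no_types, lifting) mult_eq_0_iff sum.neutral zero_neq_numeral)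
  have "0 < (\<Sum>i\<in>I. w i * even_pow m (k * a i))"
    using I j E by (intro sum_pos2[of I j]) (auto simp: order_less_le)
  then show ?thesis unfolding profile_fun_def by simp
qed

lemma profile_fun_max_at_zero:
  assumes p: "profile m I w a" and m: "0 < m" "m \<noteq> 1" and k: "0 \<le> k" "k \<le> 1"
  shows "0 \<le> (m - 1) * (profile_fun m I w a k - profile_fun m I w a 0)"
proof -
  have "profile_fun m I w a k - profile_fun m I w a 0 = (\<Sum>i\<in>I. w i * (even_pow m (k * a i) - 2)) / 2"
    unfolding profile_fun_def by (simp add: right_diff_distrib sum_subtractf diff_divide_distrib)
  then have "(m - 1) * (profile_fun m I w a k - profile_fun m I w a 0)
      = (m - 1) * (\<Sum>i\<in>I. w i * (even_pow m (k * a i) - 2)) / 2"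
    by simp
  also have "\<dots> = (\<Sum>i\<in>I. w i * ((m - 1) * (even_pow m (k * a i) - 2))) / 2"
    by (simp add: sum_distrib_left mult.left_commute)
  finally have eq: "(m - 1) * (profile_fun m I w a k - profile_fun m I w a 0)
      = (\<Sum>i\<in>I. w i * ((m - 1) * (even_pow m (k * a i) - 2))) / 2" .
  have "0 \<le> w i * ((m - 1) * (even_pow m (k * a i) - 2))" if "i \<in> I" for i
  proof -
    have "0 \<le> w i" "0 \<le> a i" "a i \<le> 1" using p that unfolding profile_def by auto
    moreover from this have "0 \<le> (m - 1) * (even_pow m (k * a i) - 2)"
      using even_pow_mono[OF m, of 0 "k * a i"] k by (simp add: mult_le_one right_diff_distrib)
    ultimately show ?thesis by simp
  qed
  then show ?thesis unfolding eq by (simp add: sum_nonneg)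
qed

lemma profile_concentrated:
  assumes p: "profile m I w a" and m: "0 < m" "m \<noteq> 1" and c: "c = 0 \<or> c = 1"
    and norm: "sum w I * even_pow m c = 2" and i: "i \<in> I" "w i \<noteq> 0"
  shows "a i = c"
proof (rule ccontr)
  assume "a i \<noteq> c"
  define s where "s = (if c = 0 then m - 1 else 1 - m)"
  have I: "finite I" "\<And>j. j \<in> I \<Longrightarrow> 0 \<le> w j \<and> 0 \<le> a j \<and> a j \<le> 1"
    and sum_E: "(\<Sum>j\<in>I. w j * even_pow m (a j)) = 2"
    using p unfolding profile_def by auto
  have gap: "0 \<le> s * (even_pow m (a j) - even_pow m c)" if "j \<in> I" for j
    using even_pow_mono[OF m, of 0 "a j"] even_pow_mono[OF m, of "a j" 1] I(2)[OF that] c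
    unfolding s_def by (auto simp: algebra_simps)
  have "(\<Sum>j\<in>I. w j * (s * (even_pow m (a j) - even_pow m c)))
      = s * ((\<Sum>j\<in>I. w j * even_pow m (a j)) - sum w I * even_pow m c)"
    by (simp add: algebra_simps sum_subtractf sum_distrib_left sum_distrib_right)
  also have "\<dots> = 0" using sum_E norm by simp
  finally have "\<forall>j\<in>I. w j * (s * (even_pow m (a j) - even_pow m c)) = 0"
    using I gap by (subst sum_nonneg_eq_0_iff[symmetric]) auto
  then have "s * (even_pow m (a i) - even_pow m c) = 0" using i by auto
  moreover have "0 < s * (even_pow m (a i) - even_pow m c)"
    using even_pow_strict_mono[OF m, of 0 "a i"] even_pow_strict_mono[OF m, of "a i" 1] I(2)[OF i(1)] c
      \<open>a i \<noteq> c\<close> unfolding s_def by (auto simp: algebra_simps)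
  ultimately show False by linarith
qed

lemma profile_fun_tangent_bound:
  assumes p: "profile m I w a" and m: "0 < m" "m \<noteq> 1" and \<sigma>: "0 \<le> \<sigma> * ((m - 2) * (m - 3))"
    and k: "0 \<le> k" "k \<le> 1" and c: "0 \<le> c" "c \<le> 1" and norm: "sum w I * even_pow m c = 2"
  shows "\<sigma> * (m - 1) * (profile_fun m I w a k - sum w I * even_pow m (k * c) / 2) \<le> 0"
proof (cases "c = 0 \<or> c = 1")
  case True
  txt \<open>No tangent is available at an endpoint, but there the normalisation puts all weight on bias c.\<close>
  have "w i * even_pow m (k * a i) = w i * even_pow m (k * c)" if "i \<in> I" for i
    using profile_concentrated[OF p m True norm that] by (cases "w i = 0") auto
  then have "(\<Sum>i\<in>I. w i * even_pow m (k * a i)) = sum w I * even_pow m (k * c)"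
    unfolding sum_distrib_right by (rule sum.cong[OF refl])
  then show ?thesis unfolding profile_fun_def by simp
next
  case False
  then have c01: "0 < c" "c < 1" using c by auto
  have I: "finite I" "\<And>i. i \<in> I \<Longrightarrow> 0 \<le> w i \<and> 0 \<le> a i \<and> a i \<le> 1"
    and sum_E: "(\<Sum>i\<in>I. w i * even_pow m (a i)) = 2"
    using p unfolding profile_def by auto
  define \<rho> where "\<rho> = odd_pow_ratio (m - 1) k c"
  let ?t = "\<lambda>i. \<sigma> * (m - 1) * (even_pow m (k * a i) - even_pow m (k * c) - \<rho> * (even_pow m (a i) - even_pow m c))"
  have "(\<Sum>i\<in>I. w i * ?t i) \<le> 0"
  proof (rule sum_nonpos)
    fix i assume "i \<in> I"
    then show "w i * ?t i \<le> 0"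
      using I(2)[of i] even_pow_tangent[OF m \<sigma> k c01] unfolding \<rho>_def by (simp add: mult_nonneg_nonpos)
  qed
  moreover have "(\<Sum>i\<in>I. w i * ?t i) = \<sigma> * (m - 1) * ((\<Sum>i\<in>I. w i * even_pow m (k * a i))
      - sum w I * even_pow m (k * c) - \<rho> * ((\<Sum>i\<in>I. w i * even_pow m (a i)) - sum w I * even_pow m c))"
    using I(1) by (induct I rule: finite_induct) (simp_all add: algebra_simps)
  ultimately have "\<sigma> * (m - 1) * ((\<Sum>i\<in>I. w i * even_pow m (k * a i)) - sum w I * even_pow m (k * c)) \<le> 0"
    using sum_E norm by simp
  then show ?thesis unfolding profile_fun_def by (simp add: field_simps)
qed

lemma profile_fun_le_constant_bias:
  assumes p: "profile m I w a" and q: "profile m J v b" and b: "\<And>j. j \<in> J \<Longrightarrow> b j = c"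
    and S: "sum w I = sum v J"
    and m: "0 < m" "m \<noteq> 1" and \<sigma>: "0 \<le> \<sigma> * ((m - 2) * (m - 3))" and k: "0 \<le> k" "k \<le> 1"
  shows "\<sigma> * (m - 1) * (profile_fun m I w a k - profile_fun m J v b k) \<le> 0"
proof -
  have J: "\<And>j. j \<in> J \<Longrightarrow> 0 \<le> b j \<and> b j \<le> 1" and sum_E: "(\<Sum>j\<in>J. v j * even_pow m (b j)) = 2"
    using q unfolding profile_def by auto
  then obtain j where "j \<in> J" by fastforce
  then have c: "0 \<le> c" "c \<le> 1" using J b by force+
  have "(\<Sum>j\<in>J. v j * even_pow m (b j)) = sum v J * even_pow m c"
    using b by (simp add: sum_distrib_right)
  then have norm: "sum w I * even_pow m c = 2" using sum_E S by simp
  have GJ: "profile_fun m J v b k = sum w I * even_pow m (k * c) / 2"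
    unfolding profile_fun_def S using b by (simp add: sum_distrib_right)
  show ?thesis unfolding GJ by (rule profile_fun_tangent_bound[OF p m \<sigma> k c norm])
qed

lemma profile_fun_binary_bias:
  assumes q: "profile m J v b" and b: "\<And>j. j \<in> J \<Longrightarrow> b j = 0 \<or> b j = 1" and m: "0 < m" "m \<noteq> 1"
  shows "profile_fun m J v b k = sum v J + (1 - sum v J) * (even_pow m k - 2) / (even_pow m 1 - 2)"
proof -
  have lin: "(\<Sum>j\<in>J. v j * even_pow m (x * b j)) = 2 * sum v J + (even_pow m x - 2) * (\<Sum>j\<in>J. v j * b j)"
    for x
  proof -
    have "v j * even_pow m (x * b j) = 2 * v j + (even_pow m x - 2) * (v j * b j)" if "j \<in> J" for j
      using b[OF that] by (auto simp: algebra_simps)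
    then show ?thesis by (simp add: sum.distrib sum_distrib_left)
  qed
  have "2 = 2 * sum v J + (even_pow m 1 - 2) * (\<Sum>j\<in>J. v j * b j)"
    using q lin[of 1] unfolding profile_def by simp
  moreover have "even_pow m 1 - 2 \<noteq> 0" using even_pow_one_sign[OF m] by auto
  ultimately have "(\<Sum>j\<in>J. v j * b j) = 2 * (1 - sum v J) / (even_pow m 1 - 2)"
    by (simp add: field_simps)
  then show ?thesis unfolding profile_fun_def lin by (simp add: field_simps)
qed

lemma profile_fun_chord_bound:
  assumes p: "profile m I w a" and m: "0 < m" "m \<noteq> 1" and \<sigma>: "0 \<le> \<sigma> * ((m - 2) * (m - 3))"
    and k: "0 \<le> k" "k \<le> 1"
  shows "0 \<le> \<sigma> * ((profile_fun m I w a k - sum w I) * (even_pow m 1 - 2) - (even_pow m k - 2) * (1 - sum w I))"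
proof -
  have I: "finite I" "\<And>i. i \<in> I \<Longrightarrow> 0 \<le> w i \<and> 0 \<le> a i \<and> a i \<le> 1"
    and sum_E: "(\<Sum>i\<in>I. w i * even_pow m (a i)) = 2"
    using p unfolding profile_def by auto
  let ?t = "\<lambda>i. \<sigma> * ((even_pow m (k * a i) - 2) * (even_pow m 1 - 2) - (even_pow m k - 2) * (even_pow m (a i) - 2))"
  have "0 \<le> (\<Sum>i\<in>I. w i * ?t i)"
    using I(2) even_pow_chord[OF m \<sigma> k] by (intro sum_nonneg) simp
  also have "(\<Sum>i\<in>I. w i * ?t i) = \<sigma> * (((\<Sum>i\<in>I. w i * even_pow m (k * a i)) - 2 * sum w I) * (even_pow m 1 - 2)
      - (even_pow m k - 2) * ((\<Sum>i\<in>I. w i * even_pow m (a i)) - 2 * sum w I))"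
    using I(1) by (induct I rule: finite_induct) (simp_all add: algebra_simps)
  finally show ?thesis using sum_E unfolding profile_fun_def by (simp add: field_simps)
qed

lemma profile_fun_ge_binary_bias:
  assumes p: "profile m I w a" and q: "profile m J v b" and b: "\<And>j. j \<in> J \<Longrightarrow> b j = 0 \<or> b j = 1"
    and S: "sum w I = sum v J"
    and m: "0 < m" "m \<noteq> 1" and \<sigma>: "0 \<le> \<sigma> * ((m - 2) * (m - 3))" and k: "0 \<le> k" "k \<le> 1"
  shows "0 \<le> \<sigma> * (m - 1) * (profile_fun m I w a k - profile_fun m J v b k)"
proof -
  define d where "d = even_pow m 1 - 2"
  have d: "0 < (m - 1) * d" using even_pow_one_sign[OF m] unfolding d_def .
  then have "d \<noteq> 0" by auto
  have GJ: "profile_fun m J v b k = sum w I + (1 - sum w I) * (even_pow m k - 2) / d"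
    using profile_fun_binary_bias[OF q b m] S unfolding d_def by simp
  have eq: "\<sigma> * ((profile_fun m I w a k - sum w I) * d - (even_pow m k - 2) * (1 - sum w I))
      = \<sigma> * d * (profile_fun m I w a k - profile_fun m J v b k)"
    unfolding GJ using \<open>d \<noteq> 0\<close> by (simp add: field_simps)
  have "0 \<le> \<sigma> * ((profile_fun m I w a k - sum w I) * d - (even_pow m k - 2) * (1 - sum w I))"
    using profile_fun_chord_bound[OF p m \<sigma> k] unfolding d_def .
  then have "0 \<le> \<sigma> * d * (profile_fun m I w a k - profile_fun m J v b k)"
    unfolding eq .
  then have "0 \<le> ((m - 1) * d) * (\<sigma> * d * (profile_fun m I w a k - profile_fun m J v b k)) / d\<^sup>2"
    using d by simp
  also have "\<dots> = \<sigma> * (m - 1) * (profile_fun m I w a k - profile_fun m J v b k)"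
    using \<open>d \<noteq> 0\<close> by (simp add: power2_eq_square)
  finally show ?thesis .
qed

section \<open>Symmetric binary-input channels\<close>

lemma even_pow_pair:
  fixes m p q U V :: real
  assumes m: "0 < m" and pq: "0 \<le> p" "0 \<le> q" "p + q = 1" and UV: "0 \<le> U" "0 \<le> V"
  shows "(p * U + q * V) powr m + (q * U + p * V) powr m
       = ((U + V) / 2) powr m * even_pow m (\<bar>p - q\<bar> * (\<bar>U - V\<bar> / (U + V)))"
proof (cases "U + V = 0")
  case True
  then have "U = 0" "V = 0" using UV by auto
  then show ?thesis by simp
next
  case False
  define R where "R = (U + V) / 2"
  define t where "t = (p - q) * ((U - V) / (U + V))"
  have R: "0 < R" using False UV by (simp add: R_def)
  have "\<bar>p - q\<bar> * \<bar>U - V\<bar> \<le> \<bar>U - V\<bar>" using pq by (intro mult_left_le_one_le) auto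
  also have "\<dots> \<le> U + V" using UV by (simp add: abs_le_iff)
  finally have "\<bar>t\<bar> \<le> 1"
    unfolding t_def using False UV by (simp add: abs_mult abs_divide divide_le_eq_1)
  then have t: "0 \<le> 1 + t" "0 \<le> 1 - t" by (simp_all add: abs_le_iff)
  have q: "q = 1 - p" using pq by simp
  have e: "p * U + q * V = R * (1 + t)" "q * U + p * V = R * (1 - t)"
    using False unfolding R_def t_def q by (simp_all add: field_simps)
  have "(R * (1 + t)) powr m = R powr m * (1 + t) powr m" "(R * (1 - t)) powr m = R powr m * (1 - t) powr m"
    using R t by (simp_all add: powr_mult)
  then have "(p * U + q * V) powr m + (q * U + p * V) powr m = R powr m * (1 + t) powr m + R powr m * (1 - t) powr m"
    unfolding e by simp
  also have "\<dots> = R powr m * even_pow m t"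
    unfolding even_pow_def by (simp only: distrib_left)
  also have "even_pow m t = even_pow m (\<bar>p - q\<bar> * (\<bar>U - V\<bar> / (U + V)))"
    using even_pow_abs[of m t] UV unfolding t_def by (simp add: abs_mult abs_divide)
  finally show ?thesis unfolding R_def .
qed

definition sibson_sum :: "real \<Rightarrow> (bool \<Rightarrow> real) \<Rightarrow> (bool \<Rightarrow> int \<Rightarrow> real) \<Rightarrow> int set \<Rightarrow> real" where
  "sibson_sum \<alpha> P W Y = (\<Sum>y\<in>Y. (\<Sum>x\<in>UNIV. P x * W x y powr \<alpha>) powr (1 / \<alpha>))"

lemma sibson_MI_eq: "sibson_MI \<alpha> P W Y = \<alpha> / (\<alpha> - 1) * ln (sibson_sum \<alpha> P W Y)"
  unfolding sibson_MI_def sibson_sum_def ..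

definition symmetric_channel :: "(bool \<Rightarrow> int \<Rightarrow> real) \<Rightarrow> int set \<Rightarrow> bool" where
  "symmetric_channel W Y \<longleftrightarrow> finite Y \<and> (\<forall>x y. 0 \<le> W x y) \<and> (\<forall>x. (\<Sum>y\<in>Y. W x y) = 1)
     \<and> (\<exists>\<pi>. \<forall>y\<in>Y. \<pi> y \<in> Y \<and> \<pi> (\<pi> y) = y \<and> W False y = W True (\<pi> y))"

definition sym_weight :: "real \<Rightarrow> (bool \<Rightarrow> int \<Rightarrow> real) \<Rightarrow> int \<Rightarrow> real" where
  "sym_weight \<alpha> W y = ((W False y powr \<alpha> + W True y powr \<alpha>) / 2) powr (1 / \<alpha>)"

text \<open>Where both transition probabilities vanish the bias is 0/0 = 0; the weight is 0 there too.\<close>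

definition sym_bias :: "real \<Rightarrow> (bool \<Rightarrow> int \<Rightarrow> real) \<Rightarrow> int \<Rightarrow> real" where
  "sym_bias \<alpha> W y = \<bar>W False y powr \<alpha> - W True y powr \<alpha>\<bar> / (W False y powr \<alpha> + W True y powr \<alpha>)"

lemma symmetric_channel_sibson_sum:
  assumes W: "symmetric_channel W Y" and \<alpha>: "0 < \<alpha>" and P: "input_dist P"
  shows "sibson_sum \<alpha> P W Y = profile_fun (1 / \<alpha>) Y (sym_weight \<alpha> W) (sym_bias \<alpha> W) \<bar>P False - P True\<bar>"
proof -
  obtain \<pi> where \<pi>: "\<And>y. y \<in> Y \<Longrightarrow> \<pi> y \<in> Y \<and> \<pi> (\<pi> y) = y \<and> W False y = W True (\<pi> y)"
    using W unfolding symmetric_channel_def by blast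
  define p q where "p = P False" and "q = P True"
  have pq: "0 \<le> p" "0 \<le> q" "p + q = 1" using P unfolding input_dist_def p_def q_def by auto
  define f where "f y = (p * W False y powr \<alpha> + q * W True y powr \<alpha>) powr (1 / \<alpha>)" for y
  have "2 * sibson_sum \<alpha> P W Y = (\<Sum>y\<in>Y. f y) + (\<Sum>y\<in>Y. f (\<pi> y))"
  proof -
    have "(\<Sum>y\<in>Y. f (\<pi> y)) = (\<Sum>y\<in>Y. f y)"
      using \<pi> by (intro sum.reindex_bij_witness[of _ \<pi> \<pi>]) auto
    then show ?thesis unfolding sibson_sum_def f_def p_def q_def by (simp add: UNIV_bool)
  qed
  also have "\<dots> = (\<Sum>y\<in>Y. sym_weight \<alpha> W y * even_pow (1 / \<alpha>) (\<bar>p - q\<bar> * sym_bias \<alpha> W y))"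
    unfolding sum.distrib[symmetric]
  proof (rule sum.cong[OF refl])
    fix y assume "y \<in> Y"
    have "W True y = W False (\<pi> y)" using \<pi>[OF \<open>y \<in> Y\<close>] \<pi>[of "\<pi> y"] by auto
    then have "f (\<pi> y) = (q * W False y powr \<alpha> + p * W True y powr \<alpha>) powr (1 / \<alpha>)"
      unfolding f_def using \<pi>[OF \<open>y \<in> Y\<close>] by (simp add: add.commute)
    then show "f y + f (\<pi> y) = sym_weight \<alpha> W y * even_pow (1 / \<alpha>) (\<bar>p - q\<bar> * sym_bias \<alpha> W y)"
      unfolding f_def sym_weight_def sym_bias_def using even_pow_pair[of "1 / \<alpha>" p q] pq \<alpha> by simp
  qed
  finally show ?thesis unfolding profile_fun_def p_def q_def by (simp add: mult.commute)
qed

lemma symmetric_channel_profile: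
  assumes W: "symmetric_channel W Y" and \<alpha>: "0 < \<alpha>"
  shows "profile (1 / \<alpha>) Y (sym_weight \<alpha> W) (sym_bias \<alpha> W)"
proof -
  have W01: "finite Y" "\<And>x y. 0 \<le> W x y" "\<And>x. (\<Sum>y\<in>Y. W x y) = 1"
    using W unfolding symmetric_channel_def by auto
  have bias: "0 \<le> sym_bias \<alpha> W y \<and> sym_bias \<alpha> W y \<le> 1" for y
  proof -
    have "\<bar>W False y powr \<alpha> - W True y powr \<alpha>\<bar> \<le> W False y powr \<alpha> + W True y powr \<alpha>"
      using powr_ge_zero[of "W False y" \<alpha>] powr_ge_zero[of "W True y" \<alpha>] by (simp add: abs_le_iff)
    then show ?thesis unfolding sym_bias_def by (auto simp: divide_le_eq_1)
  qed
  have "sym_weight \<alpha> W y * even_pow (1 / \<alpha>) (sym_bias \<alpha> W y) = W False y + W True y" for y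
    using even_pow_pair[of "1 / \<alpha>" 1 0 "W False y powr \<alpha>" "W True y powr \<alpha>"] \<alpha> W01(2)
    unfolding sym_weight_def sym_bias_def by (simp add: powr_powr)
  then have "(\<Sum>y\<in>Y. sym_weight \<alpha> W y * even_pow (1 / \<alpha>) (sym_bias \<alpha> W y)) = 2"
    using W01(3) by (simp add: sum.distrib)
  then show ?thesis unfolding profile_def using W01(1) bias by (simp add: sym_weight_def)
qed

lemma alpha_scaled_ln_le:
  fixes \<alpha> F1 F2 :: real
  assumes \<alpha>: "0 < \<alpha>" "\<alpha> \<noteq> 1" and F: "0 < F1" "0 < F2" and le: "(1 / \<alpha> - 1) * (F1 - F2) \<le> 0"
  shows "\<alpha> / (\<alpha> - 1) * ln F2 \<le> \<alpha> / (\<alpha> - 1) * ln F1"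
proof (cases "1 < \<alpha>")
  case True
  then have "1 / \<alpha> - 1 < 0" by (simp add: divide_less_eq)
  then have "F2 \<le> F1" using le by (simp add: mult_le_0_iff)
  moreover have "0 < \<alpha> / (\<alpha> - 1)" using True by simp
  ultimately show ?thesis using F by (intro mult_left_mono) auto
next
  case False
  then have "\<alpha> < 1" using \<alpha> by simp
  then have "0 < 1 / \<alpha> - 1" using \<alpha> by (simp add: field_simps)
  then have "F1 \<le> F2" using le by (simp add: mult_le_0_iff)
  moreover have "\<alpha> / (\<alpha> - 1) < 0" using \<open>\<alpha> < 1\<close> \<alpha> by (simp add: divide_pos_neg)
  ultimately show ?thesis using F by (intro mult_left_mono_neg) auto
qed

lemma input_dist_bias:
  assumes "input_dist P"
  shows "0 \<le> \<bar>P False - P True\<bar>" "\<bar>P False - P True\<bar> \<le> 1"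
proof -
  have "0 \<le> P False" "0 \<le> P True" "P False + P True = 1" using assms unfolding input_dist_def by auto
  then show "0 \<le> \<bar>P False - P True\<bar>" "\<bar>P False - P True\<bar> \<le> 1" by (auto simp: abs_le_iff)
qed

lemma alpha_capacity_symmetric_channel:
  assumes W: "symmetric_channel W Y" and \<alpha>: "0 < \<alpha>" "\<alpha> \<noteq> 1"
  shows "alpha_capacity \<alpha> W Y = \<alpha> / (\<alpha> - 1) * ln (sum (sym_weight \<alpha> W) Y)"
proof -
  let ?G = "profile_fun (1 / \<alpha>) Y (sym_weight \<alpha> W) (sym_bias \<alpha> W)"
  have p: "profile (1 / \<alpha>) Y (sym_weight \<alpha> W) (sym_bias \<alpha> W)"
    using symmetric_channel_profile[OF W \<alpha>(1)] .
  have m: "0 < 1 / \<alpha>" "1 / \<alpha> \<noteq> 1" using \<alpha> by auto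
  define uniform :: "bool \<Rightarrow> real" where "uniform = (\<lambda>_. 1 / 2)"
  have "input_dist uniform" unfolding input_dist_def uniform_def by simp
  have "sibson_MI \<alpha> uniform W Y = \<alpha> / (\<alpha> - 1) * ln (sum (sym_weight \<alpha> W) Y)"
    unfolding sibson_MI_eq symmetric_channel_sibson_sum[OF W \<alpha>(1) \<open>input_dist uniform\<close>]
    by (simp add: uniform_def profile_fun_zero)
  with \<open>input_dist uniform\<close>
  have "\<alpha> / (\<alpha> - 1) * ln (sum (sym_weight \<alpha> W) Y) \<in> (\<lambda>P. sibson_MI \<alpha> P W Y) ` {P. input_dist P}"
    by (intro rev_image_eqI[of uniform]) auto
  moreover have "sibson_MI \<alpha> P W Y \<le> \<alpha> / (\<alpha> - 1) * ln (sum (sym_weight \<alpha> W) Y)" if P: "input_dist P" for P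
  proof -
    note k = input_dist_bias[OF P]
    have "\<alpha> / (\<alpha> - 1) * ln (?G \<bar>P False - P True\<bar>) \<le> \<alpha> / (\<alpha> - 1) * ln (?G 0)"
      using profile_fun_max_at_zero[OF p m k] profile_fun_pos[OF p k] profile_fun_pos[OF p, of 0]
      by (intro alpha_scaled_ln_le[OF \<alpha>]) (auto simp: algebra_simps)
    then show ?thesis unfolding sibson_MI_eq symmetric_channel_sibson_sum[OF W \<alpha>(1) P] profile_fun_zero .
  qed
  ultimately show ?thesis
    unfolding alpha_capacity_def by (intro cSup_eq_maximum) auto
qed

lemma sym_weight_sum_eq_if_alpha_capacity_eq:
  assumes W1: "symmetric_channel W1 Y1" and W2: "symmetric_channel W2 Y2" and \<alpha>: "0 < \<alpha>" "\<alpha> \<noteq> 1"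
    and cap: "alpha_capacity \<alpha> W1 Y1 = alpha_capacity \<alpha> W2 Y2"
  shows "sum (sym_weight \<alpha> W1) Y1 = sum (sym_weight \<alpha> W2) Y2"
proof -
  have "0 < sum (sym_weight \<alpha> W1) Y1" "0 < sum (sym_weight \<alpha> W2) Y2"
    using profile_fun_pos[OF symmetric_channel_profile[OF W1 \<alpha>(1)], of 0]
      profile_fun_pos[OF symmetric_channel_profile[OF W2 \<alpha>(1)], of 0]
    by (simp_all add: profile_fun_zero)
  moreover have "ln (sum (sym_weight \<alpha> W1) Y1) = ln (sum (sym_weight \<alpha> W2) Y2)"
    using cap \<alpha> unfolding alpha_capacity_symmetric_channel[OF W1 \<alpha>] alpha_capacity_symmetric_channel[OF W2 \<alpha>]
    by simp
  ultimately show ?thesis by simp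
qed

lemma more_capable_symmetric_channel:
  assumes W1: "symmetric_channel W1 Y1" and W2: "symmetric_channel W2 Y2" and \<alpha>: "0 < \<alpha>" "\<alpha> \<noteq> 1"
    and le: "\<And>k. 0 \<le> k \<Longrightarrow> k \<le> 1 \<Longrightarrow>
      (1 / \<alpha> - 1) * (profile_fun (1 / \<alpha>) Y1 (sym_weight \<alpha> W1) (sym_bias \<alpha> W1) k
                     - profile_fun (1 / \<alpha>) Y2 (sym_weight \<alpha> W2) (sym_bias \<alpha> W2) k) \<le> 0"
  shows "more_capable \<alpha> W1 Y1 W2 Y2"
  unfolding more_capable_def
proof (intro allI impI)
  fix P assume P: "input_dist P"
  note k = input_dist_bias[OF P]
  show "sibson_MI \<alpha> P W2 Y2 \<le> sibson_MI \<alpha> P W1 Y1"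
    unfolding sibson_MI_eq symmetric_channel_sibson_sum[OF W1 \<alpha>(1) P] symmetric_channel_sibson_sum[OF W2 \<alpha>(1) P]
    using profile_fun_pos[OF symmetric_channel_profile[OF W1 \<alpha>(1)] k]
      profile_fun_pos[OF symmetric_channel_profile[OF W2 \<alpha>(1)] k] le[OF k]
    by (rule alpha_scaled_ln_le[OF \<alpha>])
qed

lemma more_capable_extremal_channels:
  assumes W: "symmetric_channel W Y" and S: "symmetric_channel S YS" and E: "symmetric_channel E YE"
    and \<alpha>: "0 < \<alpha>" "\<alpha> \<noteq> 1"
    and S_bias: "\<And>y. y \<in> YS \<Longrightarrow> sym_bias \<alpha> S y = c"
    and E_bias: "\<And>y. y \<in> YE \<Longrightarrow> sym_bias \<alpha> E y = 0 \<or> sym_bias \<alpha> E y = 1"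
    and cap_S: "alpha_capacity \<alpha> W Y = alpha_capacity \<alpha> S YS"
    and cap_E: "alpha_capacity \<alpha> W Y = alpha_capacity \<alpha> E YE"
  shows "0 \<le> (1 / \<alpha> - 2) * (1 / \<alpha> - 3) \<Longrightarrow> more_capable \<alpha> E YE W Y \<and> more_capable \<alpha> W Y S YS"
    and "(1 / \<alpha> - 2) * (1 / \<alpha> - 3) \<le> 0 \<Longrightarrow> more_capable \<alpha> S YS W Y \<and> more_capable \<alpha> W Y E YE"
proof -
  define m where "m = 1 / \<alpha>"
  have m: "0 < m" "m \<noteq> 1" using \<alpha> by (auto simp: m_def)
  let ?G = "\<lambda>V YV. profile_fun m YV (sym_weight \<alpha> V) (sym_bias \<alpha> V)"
  have pW: "profile m Y (sym_weight \<alpha> W) (sym_bias \<alpha> W)"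
    and pS: "profile m YS (sym_weight \<alpha> S) (sym_bias \<alpha> S)"
    and pE: "profile m YE (sym_weight \<alpha> E) (sym_bias \<alpha> E)"
    using symmetric_channel_profile \<alpha> W S E unfolding m_def by blast+
  note sums = sym_weight_sum_eq_if_alpha_capacity_eq[OF W S \<alpha> cap_S]
    sym_weight_sum_eq_if_alpha_capacity_eq[OF W E \<alpha> cap_E]
  have bounds: "\<sigma> * (m - 1) * (?G W Y k - ?G S YS k) \<le> 0" "0 \<le> \<sigma> * (m - 1) * (?G W Y k - ?G E YE k)"
    if "0 \<le> \<sigma> * ((m - 2) * (m - 3))" "0 \<le> k" "k \<le> 1" for \<sigma> k
    using profile_fun_le_constant_bias[OF pW pS S_bias sums(1) m that]
      profile_fun_ge_binary_bias[OF pW pE E_bias sums(2) m that] by auto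
  show "more_capable \<alpha> E YE W Y \<and> more_capable \<alpha> W Y S YS" if "0 \<le> (1 / \<alpha> - 2) * (1 / \<alpha> - 3)"
    using bounds[of 1] that unfolding m_def
    by (auto intro!: more_capable_symmetric_channel[OF _ _ \<alpha>] W S E simp: algebra_simps)
  show "more_capable \<alpha> S YS W Y \<and> more_capable \<alpha> W Y E YE" if "(1 / \<alpha> - 2) * (1 / \<alpha> - 3) \<le> 0"
    using bounds[of "-1"] that unfolding m_def
    by (auto intro!: more_capable_symmetric_channel[OF _ _ \<alpha>] W S E simp: algebra_simps)
qed

lemma is_biso_symmetric_channel: "is_biso l W \<Longrightarrow> symmetric_channel W (biso_out l)"
  unfolding is_biso_def symmetric_channel_def
  by (intro conjI exI[of _ uminus]) (auto simp: biso_out_def)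

lemma BSC_symmetric_channel:
  assumes "0 \<le> \<delta>" "\<delta> \<le> 1"
  shows "symmetric_channel (BSC \<delta>) BSC_out"
  unfolding symmetric_channel_def
  using assms by (intro conjI exI[of _ "\<lambda>y. 1 - y"]) (auto simp: BSC_def BSC_out_def bit_def)

lemma BEC_symmetric_channel:
  assumes "0 \<le> \<epsilon>" "\<epsilon> \<le> 1"
  shows "symmetric_channel (BEC \<epsilon>) BEC_out"
  unfolding symmetric_channel_def
  using assms by (intro conjI exI[of _ "\<lambda>y. if y = 2 then 2 else 1 - y"]) (auto simp: BEC_def BEC_out_def bit_def)

lemma sym_bias_BSC: "y \<in> BSC_out \<Longrightarrow> sym_bias \<alpha> (BSC \<delta>) y = sym_bias \<alpha> (BSC \<delta>) 0"
  by (auto simp: BSC_out_def sym_bias_def BSC_def bit_def abs_minus_commute add.commute)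

lemma sym_bias_BEC:
  assumes "0 \<le> \<epsilon>" "\<epsilon> \<le> 1" "y \<in> BEC_out"
  shows "sym_bias \<alpha> (BEC \<epsilon>) y = 0 \<or> sym_bias \<alpha> (BEC \<epsilon>) y = 1"
  using assms by (auto simp: BEC_out_def sym_bias_def BEC_def bit_def)

theorem corollary2:
  fixes \<alpha> \<delta> \<epsilon> :: real and l :: nat and W :: "bool \<Rightarrow> int \<Rightarrow> real"
  assumes "\<alpha> > 0" and "\<alpha> \<noteq> 1"
    and "is_biso l W"
    and "0 \<le> \<delta>" and "\<delta> \<le> 1"
    and "0 \<le> \<epsilon>" and "\<epsilon> \<le> 1"
    and "alpha_capacity \<alpha> W (biso_out l) = alpha_capacity \<alpha> (BSC \<delta>) BSC_out"
    and "alpha_capacity \<alpha> W (biso_out l) = alpha_capacity \<alpha> (BEC \<epsilon>) BEC_out"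
  shows "((\<alpha> > 1 \<or> (1/2 \<le> \<alpha> \<and> \<alpha> < 1) \<or> \<alpha> \<le> 1/3) \<longrightarrow>
           more_capable \<alpha> (BEC \<epsilon>) BEC_out W (biso_out l) \<and>
           more_capable \<alpha> W (biso_out l) (BSC \<delta>) BSC_out) \<and>
         ((1/3 \<le> \<alpha> \<and> \<alpha> \<le> 1/2) \<longrightarrow>
           more_capable \<alpha> (BSC \<delta>) BSC_out W (biso_out l) \<and>
           more_capable \<alpha> W (biso_out l) (BEC \<epsilon>) BEC_out)"
proof -
  note extremal = more_capable_extremal_channels[OF is_biso_symmetric_channel[OF assms(3)]
      BSC_symmetric_channel[OF assms(4,5)] BEC_symmetric_channel[OF assms(6,7)] assms(1,2)
      sym_bias_BSC sym_bias_BEC[OF assms(6,7)] assms(8,9)]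
  have "0 \<le> (1 / \<alpha> - 2) * (1 / \<alpha> - 3)" if "\<alpha> > 1 \<or> (1/2 \<le> \<alpha> \<and> \<alpha> < 1) \<or> \<alpha> \<le> 1/3"
  proof -
    from that consider "1 / \<alpha> \<le> 2" | "3 \<le> 1 / \<alpha>"
      using assms(1) by (auto simp: field_simps)
    then show ?thesis by cases (auto intro: mult_nonpos_nonpos)
  qed
  moreover have "(1 / \<alpha> - 2) * (1 / \<alpha> - 3) \<le> 0" if "1/3 \<le> \<alpha> \<and> \<alpha> \<le> 1/2"
    using that assms(1) by (intro mult_nonneg_nonpos) (auto simp: field_simps)
  ultimately show ?thesis using extremal by blast
qed

end
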